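(* Let $G$ be a finite group acting transitively on a finite set $X$, fix $x_0\in X$, let $H=G_{x_0}$, and let $K\subset G$ be a regular subgroup. Let $\rho\colon K\to U(\mathcal{H})$ be a unitary representation and $v\in\mathcal{H}$ such that $\{\rho(k)v\}_{k\in K}$ spans $\mathcal{H}$. Then there exists a unitary representation $\tilde\rho\colon G\to U(\mathcal{H})$ with $\tilde\rho|_K=\rho$ and $\tilde\rho(h)v=v$ for all $h\in H$ if and only if the function $\varphi(k)=\langle v,\rho(k)v\rangle$ ($k\in K$) belongs to $L^2(K)^H$.
   Context: $H$ acts on $K$ by $h\cdot k=k'$ iff $hk\cdot x_0=k'\cdot x_0$, and $L^2(K)^H$ is the space of functions $\varphi\colon K\to\mathbb{C}$ with $\varphi(h\cdot k)=\varphi(k)$ for all $h\in H$, $k\in K$. A subgroup $K\subset G$ is regular if it acts transitively on $X$ with trivial point stabilizers. Inner products are linear in the first argument. *)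

theory Defs
  imports "HOL-Algebra.Group_Action" "HOL-Analysis.Analysis"
begin

definition complex_inner_product ::
  "(complex \<Rightarrow> 'v::ab_group_add \<Rightarrow> 'v) \<Rightarrow> ('v \<Rightarrow> 'v \<Rightarrow> complex) \<Rightarrow> bool" where
  "complex_inner_product smul ip \<longleftrightarrow>
     (\<forall>a b c. ip (a + b) c = ip a c + ip b c) \<and>
     (\<forall>r a b. ip (smul r a) b = r * ip a b) \<and>
     (\<forall>a b. ip b a = cnj (ip a b)) \<and>
     (\<forall>a. 0 \<le> Re (ip a a)) \<and>
     (\<forall>a. ip a a = 0 \<longrightarrow> a = 0)"

definition unitary_op ::
  "(complex \<Rightarrow> 'v::ab_group_add \<Rightarrow> 'v) \<Rightarrow> ('v \<Rightarrow> 'v \<Rightarrow> complex) \<Rightarrow> ('v \<Rightarrow> 'v) \<Rightarrow> bool" where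
  "unitary_op smul ip U \<longleftrightarrow>
     Vector_Spaces.linear smul smul U \<and> bij U \<and> (\<forall>a b. ip (U a) (U b) = ip a b)"

definition unitary_rep ::
  "('g, 'm) monoid_scheme \<Rightarrow> 'g set \<Rightarrow> (complex \<Rightarrow> 'v::ab_group_add \<Rightarrow> 'v) \<Rightarrow>
   ('v \<Rightarrow> 'v \<Rightarrow> complex) \<Rightarrow> ('g \<Rightarrow> 'v \<Rightarrow> 'v) \<Rightarrow> bool" where
  "unitary_rep G S smul ip \<rho> \<longleftrightarrow>
     (\<forall>k\<in>S. unitary_op smul ip (\<rho> k)) \<and>
     (\<forall>a\<in>S. \<forall>b\<in>S. \<rho> (a \<otimes>\<^bsub>G\<^esub> b) = \<rho> a \<circ> \<rho> b)"

definition regular_subgroup ::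
  "('g, 'm) monoid_scheme \<Rightarrow> 'x set \<Rightarrow> ('g \<Rightarrow> 'x \<Rightarrow> 'x) \<Rightarrow> 'g set \<Rightarrow> bool" where
  "regular_subgroup G X \<phi> K \<longleftrightarrow> subgroup K G \<and>
     (\<forall>x\<in>X. \<forall>y\<in>X. \<exists>k\<in>K. \<phi> k x = y) \<and>
     (\<forall>x\<in>X. \<forall>k\<in>K. \<phi> k x = x \<longrightarrow> k = \<one>\<^bsub>G\<^esub>)"

definition H_act_K ::
  "('g, 'm) monoid_scheme \<Rightarrow> ('g \<Rightarrow> 'x \<Rightarrow> 'x) \<Rightarrow> 'x \<Rightarrow> 'g set \<Rightarrow> 'g \<Rightarrow> 'g \<Rightarrow> 'g" where
  "H_act_K G \<phi> x0 K h k = (THE k'. k' \<in> K \<and> \<phi> (h \<otimes>\<^bsub>G\<^esub> k) x0 = \<phi> k' x0)"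

text \<open>Membership in L^2(K)^H (K finite, so L^2(K) is all functions on K).\<close>
definition in_L2_inv ::
  "('g, 'm) monoid_scheme \<Rightarrow> ('g \<Rightarrow> 'x \<Rightarrow> 'x) \<Rightarrow> 'x \<Rightarrow> 'g set \<Rightarrow> 'g set \<Rightarrow> ('g \<Rightarrow> complex) \<Rightarrow> bool" where
  "in_L2_inv G \<phi> x0 H K f \<longleftrightarrow> (\<forall>h\<in>H. \<forall>k\<in>K. f (H_act_K G \<phi> x0 K h k) = f k)"

end

theory Submission
  imports Defs
begin

text \<open>
  The function \<open>\<phi>(k) = \<langle>v, \<rho>(k)v\<rangle>\<close> encodes the Gram matrix of the spanning family
  \<open>(\<rho>(k)v)\<^sub>k\<^sub>\<in>\<^sub>K\<close>, since \<open>\<langle>\<rho>(a)v, \<rho>(b)v\<rangle> = \<phi>(a\<inverse>b)\<close>. For \<open>g \<in> G\<close> and \<open>k \<in> K\<close>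
  write \<open>gk = (g\<cdot>k)h'\<close> with \<open>h' \<in> H\<close>; an extension fixing \<open>v\<close> must therefore send
  \<open>\<rho>(k)v\<close> to \<open>\<rho>(g\<cdot>k)v\<close>, and for \<open>g \<in> H\<close> unitarity then forces the invariance of \<open>\<phi>\<close>.
  Conversely, \<open>(g\<cdot>a)\<inverse>(g\<cdot>b)\<close> is an \<open>H\<close>-translate of \<open>a\<inverse>b\<close>, so invariance of \<open>\<phi>\<close> says
  that \<open>(\<rho>(g\<cdot>k)v)\<^sub>k\<close> has the same Gram matrix as \<open>(\<rho>(k)v)\<^sub>k\<close>. Families with equal Gram
  matrices satisfy the same linear relations, so \<open>\<rho>(k)v \<mapsto> \<rho>(g\<cdot>k)v\<close> extends to a
  well-defined unitary operator, and these operators compose like \<open>g\<close> because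
  \<open>k \<mapsto> g\<cdot>k\<close> is an action.
\<close>

locale complex_inner_product_space = vector_space smul
  for smul :: "complex \<Rightarrow> 'v::ab_group_add \<Rightarrow> 'v" +
  fixes ip :: "'v \<Rightarrow> 'v \<Rightarrow> complex"
  assumes inner_product: "complex_inner_product smul ip"
begin

lemma ip_add_left: "ip (a + b) c = ip a c + ip b c"
  and ip_scale_left: "ip (smul r a) b = r * ip a b"
  and ip_cnj_commute: "ip b a = cnj (ip a b)"
  and ip_self_eq_zero: "ip a a = 0 \<Longrightarrow> a = 0"
  using inner_product unfolding complex_inner_product_def by meson+

lemma ip_diff_left: "ip (a - b) c = ip a c - ip b c"
  using ip_add_left[of "a - b" b c] by simp

lemma ip_diff_right: "ip c (a - b) = ip c a - ip c b"
  by (metis ip_diff_left ip_cnj_commute complex_cnj_diff)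

lemma ip_zero_left: "ip 0 b = 0"
  using ip_add_left[of 0 0 b] by simp

lemma ip_sum_left: "ip (sum f A) b = (\<Sum>a\<in>A. ip (f a) b)"
  by (induction A rule: infinite_finite_induct) (auto simp: ip_zero_left ip_add_left)

lemma ip_sum_right: "ip b (sum f A) = (\<Sum>a\<in>A. ip b (f a))"
  by (metis (mono_tags, lifting) ip_sum_left ip_cnj_commute cnj_sum sum.cong)

lemma ip_scale_right: "ip a (smul r b) = cnj r * ip a b"
  by (metis ip_scale_left ip_cnj_commute complex_cnj_mult)

lemma ip_sum_scale:
  "ip (\<Sum>i\<in>I. smul (c i) (x i)) (\<Sum>j\<in>J. smul (d j) (y j))
   = (\<Sum>i\<in>I. \<Sum>j\<in>J. c i * cnj (d j) * ip (x i) (y j))"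
  unfolding ip_sum_left ip_sum_right ip_scale_left ip_scale_right sum_distrib_left
  by (subst sum.swap) (simp add: mult.assoc mult.left_commute)

lemma ip_sum_scale_eq_if_gram_eq:
  assumes "\<forall>i\<in>I. \<forall>j\<in>J. ip (f i) (f' j) = ip (e i) (e' j)"
  shows "ip (\<Sum>i\<in>I. smul (c i) (f i)) (\<Sum>j\<in>J. smul (d j) (f' j))
       = ip (\<Sum>i\<in>I. smul (c i) (e i)) (\<Sum>j\<in>J. smul (d j) (e' j))"
  using assms by (simp add: ip_sum_scale)

text \<open>The difference of the two sides transported to \<open>f\<close> has the same norm as the
  difference of the original sides, which is \<open>0\<close>.\<close>
lemma sum_scale_eq_if_gram_eq:
  assumes gram: "\<forall>i\<in>I. \<forall>j\<in>I. ip (f i) (f j) = ip (e i) (e j)"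
    and "\<tau> ` J \<subseteq> I" and "\<tau>' ` J' \<subseteq> I"
    and rel: "(\<Sum>j\<in>J. smul (c j) (e (\<tau> j))) = (\<Sum>j\<in>J'. smul (d j) (e (\<tau>' j)))"
  shows "(\<Sum>j\<in>J. smul (c j) (f (\<tau> j))) = (\<Sum>j\<in>J'. smul (d j) (f (\<tau>' j)))"
proof -
  have "\<forall>i\<in>A. \<forall>j\<in>B. ip (f (\<sigma> i)) (f (\<sigma>' j)) = ip (e (\<sigma> i)) (e (\<sigma>' j))"
    if "\<sigma> ` A \<subseteq> I" "\<sigma>' ` B \<subseteq> I" for A B and \<sigma> \<sigma>' :: "_ \<Rightarrow> _"
    using gram that by blast
  note transport = ip_sum_scale_eq_if_gram_eq[OF this]
  let ?u = "(\<Sum>j\<in>J. smul (c j) (f (\<tau> j))) - (\<Sum>j\<in>J'. smul (d j) (f (\<tau>' j)))"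
  let ?e = "(\<Sum>j\<in>J. smul (c j) (e (\<tau> j))) - (\<Sum>j\<in>J'. smul (d j) (e (\<tau>' j)))"
  have "ip ?u ?u = ip ?e ?e"
    unfolding ip_diff_left ip_diff_right using assms(2,3) by (simp add: transport)
  also have "\<dots> = 0" using rel by (simp add: ip_zero_left)
  finally have "?u = 0" by (rule ip_self_eq_zero)
  then show ?thesis by simp
qed

lemma spanning_family_sum_scale:
  assumes "finite I" and "span (e ` I) = UNIV"
  shows "\<exists>c. w = (\<Sum>i\<in>I. smul (c i) (e i))"
proof -
  have "w \<in> span (e ` I)" using assms(2) by simp
  then show ?thesis
  proof (induction rule: span_induct_alt)
    case base
    show ?case by (rule exI[of _ "\<lambda>_. 0"]) simp
  next
    case (step a x y)
    then obtain i0 c where i0: "i0 \<in> I" "x = e i0" and c: "y = (\<Sum>i\<in>I. smul (c i) (e i))"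
      by blast
    have "(\<Sum>i\<in>I. smul (c i + (if i = i0 then a else 0)) (e i))
        = y + (\<Sum>i\<in>I. if i = i0 then smul a (e i) else 0)"
      unfolding c scale_left_distrib sum.distrib by (intro arg_cong2[where f="(+)"] sum.cong) auto
    also have "\<dots> = smul a x + y" using i0 assms(1) by (simp add: add.commute)
    finally show ?case by metis
  qed
qed

text \<open>The family need not be independent, so coordinates are only chosen; for \<open>f\<close> with the
  Gram matrix of \<open>e\<close> the choice is irrelevant by \<open>sum_scale_eq_if_gram_eq\<close>.\<close>
definition coords :: "('i \<Rightarrow> 'v) \<Rightarrow> 'i set \<Rightarrow> 'v \<Rightarrow> 'i \<Rightarrow> complex" where
  "coords e I w = (SOME c. w = (\<Sum>i\<in>I. smul (c i) (e i)))"

definition linear_extension :: "('i \<Rightarrow> 'v) \<Rightarrow> ('i \<Rightarrow> 'v) \<Rightarrow> 'i set \<Rightarrow> 'v \<Rightarrow> 'v" where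
  "linear_extension e f I w = (\<Sum>i\<in>I. smul (coords e I w i) (f i))"

lemma sum_scale_coords:
  assumes "finite I" and "span (e ` I) = UNIV"
  shows "(\<Sum>i\<in>I. smul (coords e I w i) (e i)) = w"
  unfolding coords_def using someI_ex[OF spanning_family_sum_scale[OF assms]] by simp

context
  fixes e f :: "'i \<Rightarrow> 'v" and I :: "'i set"
  assumes finite: "finite I" and spanning: "span (e ` I) = UNIV"
    and gram: "\<forall>i\<in>I. \<forall>j\<in>I. ip (f i) (f j) = ip (e i) (e j)"
begin

lemma linear_extension_sum_scale:
  assumes "\<tau> ` J \<subseteq> I"
  shows "linear_extension e f I (\<Sum>j\<in>J. smul (c j) (e (\<tau> j))) = (\<Sum>j\<in>J. smul (c j) (f (\<tau> j)))"
  unfolding linear_extension_def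
  by (rule sum_scale_eq_if_gram_eq[OF gram _ assms, where \<tau>=id, simplified])
    (use sum_scale_coords[OF finite spanning] in auto)

lemma linear_extension_add:
  "linear_extension e f I (a + b) = linear_extension e f I a + linear_extension e f I b"
proof -
  let ?c = "coords e I"
  have "a + b = (\<Sum>i\<in>I. smul (?c a i + ?c b i) (e i))"
    by (simp add: scale_left_distrib sum.distrib sum_scale_coords[OF finite spanning])
  then have "linear_extension e f I (a + b) = (\<Sum>i\<in>I. smul (?c a i + ?c b i) (f i))"
    using linear_extension_sum_scale[of id I] by simp
  then show ?thesis by (simp add: linear_extension_def scale_left_distrib sum.distrib)
qed

lemma linear_extension_scale:
  "linear_extension e f I (smul r a) = smul r (linear_extension e f I a)"
proof -
  let ?c = "coords e I"
  have "smul r a = smul r (\<Sum>i\<in>I. smul (?c a i) (e i))"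
    by (simp add: sum_scale_coords[OF finite spanning])
  also have "\<dots> = (\<Sum>i\<in>I. smul (r * ?c a i) (e i))"
    by (simp add: scale_sum_right)
  finally have "linear_extension e f I (smul r a) = (\<Sum>i\<in>I. smul (r * ?c a i) (f i))"
    using linear_extension_sum_scale[of id I] by simp
  then show ?thesis by (simp add: linear_extension_def scale_sum_right)
qed

lemma linear_extension_linear: "Vector_Spaces.linear smul smul (linear_extension e f I)"
  unfolding Vector_Spaces.linear_iff
  using vector_space_axioms linear_extension_add linear_extension_scale by blast

lemma linear_extension_ip:
  "ip (linear_extension e f I a) (linear_extension e f I b) = ip a b"
  unfolding linear_extension_def
  using ip_sum_scale_eq_if_gram_eq[OF gram] by (simp add: sum_scale_coords[OF finite spanning])

end

end

locale regular_subgroup_action = group_action G X \<phi>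
  for G :: "('g, 'm) monoid_scheme" (structure) and X :: "'x set" and \<phi> +
  fixes x0 :: 'x and K :: "'g set"
  assumes base_point: "x0 \<in> X" and regular: "regular_subgroup G X \<phi> K"
begin

sublocale group G
  using group_hom group_hom.axioms(1) by blast

abbreviation act :: "'g \<Rightarrow> 'g \<Rightarrow> 'g" where
  "act \<equiv> H_act_K G \<phi> x0 K"

lemma subgroup_K: "subgroup K G"
  using regular unfolding regular_subgroup_def by blast

lemma K_subset: "K \<subseteq> carrier G"
  using subgroup.subset[OF subgroup_K] .

lemma K_inv_mult_closed: "a \<in> K \<Longrightarrow> b \<in> K \<Longrightarrow> inv a \<otimes> b \<in> K"
  using subgroup.m_inv_closed[OF subgroup_K] subgroup.m_closed[OF subgroup_K] by blast

lemma mem_stabilizer_iff: "h \<in> stabilizer G \<phi> x0 \<longleftrightarrow> h \<in> carrier G \<and> \<phi> h x0 = x0"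
  by (simp add: stabilizer_def)

lemma K_orbit_map_inj:
  assumes "k1 \<in> K" "k2 \<in> K" "\<phi> k1 x0 = \<phi> k2 x0"
  shows "k1 = k2"
proof -
  have c: "k1 \<in> carrier G" "k2 \<in> carrier G" using assms K_subset by auto
  have "\<phi> (inv k2 \<otimes> k1) x0 = \<phi> (inv k2) (\<phi> k2 x0)"
    using composition_rule c base_point assms(3) by simp
  also have "\<dots> = x0"
    using orbit_sym_aux c base_point by blast
  finally have "\<phi> (inv k2 \<otimes> k1) x0 = x0" .
  moreover have "inv k2 \<otimes> k1 \<in> K"
    using K_inv_mult_closed assms by blast
  ultimately have "inv k2 \<otimes> k1 = \<one>"
    using regular base_point unfolding regular_subgroup_def by blast
  then show ?thesis using c by (metis inv_equality inv_inv inv_closed)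
qed

lemma act_eqI:
  assumes "g \<in> carrier G" "k \<in> K" "k' \<in> K" "\<phi> k' x0 = \<phi> (g \<otimes> k) x0"
  shows "act g k = k'"
  unfolding H_act_K_def
  by (rule the_equality) (use assms K_orbit_map_inj in auto)

lemma act_closed:
  assumes "g \<in> carrier G" "k \<in> K"
  shows "act g k \<in> K" and "\<phi> (act g k) x0 = \<phi> (g \<otimes> k) x0"
proof -
  have "\<phi> (g \<otimes> k) x0 \<in> X"
    using assms K_subset base_point element_image by blast
  then obtain k' where k': "k' \<in> K" "\<phi> k' x0 = \<phi> (g \<otimes> k) x0"
    using regular base_point unfolding regular_subgroup_def by blast
  with act_eqI[OF assms] have "act g k = k'" by blast
  with k' show "act g k \<in> K" "\<phi> (act g k) x0 = \<phi> (g \<otimes> k) x0"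
    by auto
qed

lemma act_mult:
  assumes a: "a \<in> carrier G" and b: "b \<in> carrier G" and k: "k \<in> K"
  shows "act a (act b k) = act (a \<otimes> b) k"
proof -
  have bk: "act b k \<in> K" using act_closed(1)[OF b k] .
  have "\<phi> (act a (act b k)) x0 = \<phi> a (\<phi> (act b k) x0)"
    using act_closed(2)[OF a bk] composition_rule[OF base_point a] bk K_subset by auto
  also have "\<dots> = \<phi> ((a \<otimes> b) \<otimes> k) x0"
    using act_closed(2)[OF b k] composition_rule[OF base_point a] b k K_subset
      m_assoc[OF a b] by auto
  finally show ?thesis
    using act_eqI[OF m_closed[OF a b] k act_closed(1)[OF a bk]] by simp
qed

lemma act_K: "a \<in> K \<Longrightarrow> k \<in> K \<Longrightarrow> act a k = a \<otimes> k"
  using act_eqI subgroup.m_closed[OF subgroup_K] K_subset by blast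

lemma act_stabilizer_one: "h \<in> stabilizer G \<phi> x0 \<Longrightarrow> act h \<one> = \<one>"
  using act_eqI subgroup.one_closed[OF subgroup_K] id_eq_one base_point
  by (metis mem_stabilizer_iff r_one restrict_apply')

lemma mult_eq_act_mult_stabilizer:
  assumes g: "g \<in> carrier G" and k: "k \<in> K"
  shows "\<exists>h'\<in>stabilizer G \<phi> x0. g \<otimes> k = act g k \<otimes> h'"
proof
  have c: "k \<in> carrier G" "act g k \<in> carrier G" using act_closed assms K_subset by auto
  show "g \<otimes> k = act g k \<otimes> (inv (act g k) \<otimes> (g \<otimes> k))"
    using c g by (simp add: m_assoc[symmetric])
  have "\<phi> (inv (act g k) \<otimes> (g \<otimes> k)) x0 = \<phi> (inv (act g k)) (\<phi> (act g k) x0)"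
    using act_closed[OF assms] composition_rule c g base_point by simp
  also have "\<dots> = x0" using orbit_sym_aux c base_point by blast
  finally show "inv (act g k) \<otimes> (g \<otimes> k) \<in> stabilizer G \<phi> x0"
    using c g by (simp add: mem_stabilizer_iff)
qed

lemma act_relative_position:
  assumes g: "g \<in> carrier G" and a: "a \<in> K" and b: "b \<in> K"
  shows "\<exists>h\<in>stabilizer G \<phi> x0. inv (act g a) \<otimes> act g b = act h (inv a \<otimes> b)"
proof -
  obtain h1 where h1: "h1 \<in> stabilizer G \<phi> x0" "g \<otimes> a = act g a \<otimes> h1"
    using mult_eq_act_mult_stabilizer g a by blast
  obtain h2 where h2: "h2 \<in> stabilizer G \<phi> x0" "g \<otimes> b = act g b \<otimes> h2"
    using mult_eq_act_mult_stabilizer g b by blast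
  have c: "a \<in> carrier G" "b \<in> carrier G" "h1 \<in> carrier G" "h2 \<in> carrier G"
    "act g a \<in> carrier G" "act g b \<in> carrier G"
    using a b h1(1) h2(1) act_closed(1)[OF g a] act_closed(1)[OF g b] K_subset
    by (auto simp: mem_stabilizer_iff)
  have "h1 = inv (act g a) \<otimes> (g \<otimes> a)"
    using c g h1(2) by (simp add: inv_solve_left)
  moreover have "a \<otimes> (inv a \<otimes> b) = b"
    using c by (simp add: m_assoc[symmetric])
  ultimately have "h1 \<otimes> (inv a \<otimes> b) = inv (act g a) \<otimes> (g \<otimes> b)"
    using c g by (simp add: m_assoc)
  also have "\<dots> = (inv (act g a) \<otimes> act g b) \<otimes> h2"
    using c g h2(2) by (simp add: m_assoc)
  finally have "\<phi> (h1 \<otimes> (inv a \<otimes> b)) x0 = \<phi> (inv (act g a) \<otimes> act g b) (\<phi> h2 x0)"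
    using c base_point composition_rule by simp
  also have "\<dots> = \<phi> (inv (act g a) \<otimes> act g b) x0"
    using h2(1) by (simp add: mem_stabilizer_iff)
  finally have "act h1 (inv a \<otimes> b) = inv (act g a) \<otimes> act g b"
    using act_eqI c(3) K_inv_mult_closed a b act_closed(1)[OF g a] act_closed(1)[OF g b]
    by metis
  then show ?thesis using h1(1) by metis
qed

end

locale unitary_rep_of_regular_subgroup =
  regular_subgroup_action G X \<phi> x0 K + complex_inner_product_space smul ip
  for G :: "('g, 'm) monoid_scheme" (structure) and X :: "'x set" and \<phi> x0 K
    and smul :: "complex \<Rightarrow> 'v::ab_group_add \<Rightarrow> 'v" and ip +
  fixes \<rho> :: "'g \<Rightarrow> 'v \<Rightarrow> 'v" and v :: 'v
  assumes unitary: "unitary_rep G K smul ip \<rho>"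
begin

lemma rep_unitary_op: "k \<in> K \<Longrightarrow> unitary_op smul ip (\<rho> k)"
  and rep_mult: "a \<in> K \<Longrightarrow> b \<in> K \<Longrightarrow> \<rho> (a \<otimes> b) = \<rho> a \<circ> \<rho> b"
  using unitary unfolding unitary_rep_def by blast+

lemma rep_one: "\<rho> \<one> = id"
proof
  fix w
  have one: "\<one> \<in> K" using subgroup.one_closed[OF subgroup_K] .
  have "\<rho> \<one> (\<rho> \<one> w) = \<rho> \<one> w"
    using rep_mult[OF one one] by (metis comp_apply one_closed r_one)
  moreover have "inj (\<rho> \<one>)"
    using rep_unitary_op[OF one] unfolding unitary_op_def bij_def by blast
  ultimately show "\<rho> \<one> w = id w" by (simp add: inj_eq)
qed

lemma ip_rep_orbit:
  assumes p: "p \<in> K" and q: "q \<in> K"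
  shows "ip (\<rho> p v) (\<rho> q v) = ip v (\<rho> (inv p \<otimes> q) v)"
proof -
  have "\<rho> p (\<rho> (inv p \<otimes> q) v) = \<rho> (p \<otimes> (inv p \<otimes> q)) v"
    using rep_mult p K_inv_mult_closed[OF p q] by simp
  also have "p \<otimes> (inv p \<otimes> q) = q"
    using p q K_subset by (simp add: m_assoc[symmetric] subset_iff)
  finally show ?thesis
    using rep_unitary_op[OF p] unfolding unitary_op_def by metis
qed

lemma ip_rep_orbit_act:
  assumes invariant: "in_L2_inv G \<phi> x0 (stabilizer G \<phi> x0) K (\<lambda>k. ip v (\<rho> k v))"
    and g: "g \<in> carrier G" and a: "a \<in> K" and b: "b \<in> K"
  shows "ip (\<rho> (act g a) v) (\<rho> (act g b) v) = ip (\<rho> a v) (\<rho> b v)"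
proof -
  obtain h where h: "h \<in> stabilizer G \<phi> x0" "inv (act g a) \<otimes> act g b = act h (inv a \<otimes> b)"
    using act_relative_position[OF g a b] by blast
  have "ip (\<rho> (act g a) v) (\<rho> (act g b) v) = ip v (\<rho> (act h (inv a \<otimes> b)) v)"
    using ip_rep_orbit act_closed(1) g a b h(2) by metis
  also have "\<dots> = ip v (\<rho> (inv a \<otimes> b) v)"
    using invariant h(1) K_inv_mult_closed[OF a b] unfolding in_L2_inv_def by blast
  also have "\<dots> = ip (\<rho> a v) (\<rho> b v)"
    using ip_rep_orbit[OF a b] by simp
  finally show ?thesis .
qed

definition extended_rep :: "'g \<Rightarrow> 'v \<Rightarrow> 'v" where
  "extended_rep g = linear_extension (\<lambda>k. \<rho> k v) (\<lambda>k. \<rho> (act g k) v) K"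

context
  assumes finite_group: "finite (carrier G)"
    and spanning: "span ((\<lambda>k. \<rho> k v) ` K) = UNIV"
    and invariant: "in_L2_inv G \<phi> x0 (stabilizer G \<phi> x0) K (\<lambda>k. ip v (\<rho> k v))"
begin

lemma finite_K: "finite K"
  using finite_group K_subset finite_subset by blast

lemma extended_rep_sum_scale:
  assumes "g \<in> carrier G" and "\<tau> ` J \<subseteq> K"
  shows "extended_rep g (\<Sum>j\<in>J. smul (c j) (\<rho> (\<tau> j) v))
       = (\<Sum>j\<in>J. smul (c j) (\<rho> (act g (\<tau> j)) v))"
  unfolding extended_rep_def
  using linear_extension_sum_scale[OF finite_K spanning _ assms(2)]
    ip_rep_orbit_act[OF invariant assms(1)]
  by simp

lemma extended_rep_mult:
  assumes a: "a \<in> carrier G" and b: "b \<in> carrier G"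
  shows "extended_rep a (extended_rep b w) = extended_rep (a \<otimes> b) w"
proof -
  let ?c = "coords (\<lambda>k. \<rho> k v) K w"
  have "act b ` K \<subseteq> K" using act_closed b by auto
  then have "extended_rep a (extended_rep b w) = (\<Sum>k\<in>K. smul (?c k) (\<rho> (act a (act b k)) v))"
    using extended_rep_sum_scale[OF a] by (simp add: extended_rep_def linear_extension_def)
  then show ?thesis
    using act_mult a b by (simp add: extended_rep_def linear_extension_def)
qed

lemma extended_rep_one: "extended_rep \<one> w = w"
proof -
  have "extended_rep \<one> w = (\<Sum>k\<in>K. smul (coords (\<lambda>k. \<rho> k v) K w k) (\<rho> k v))"
    unfolding extended_rep_def linear_extension_def
    using act_K subgroup.one_closed[OF subgroup_K] K_subset by (intro sum.cong) auto
  then show ?thesis using sum_scale_coords[OF finite_K spanning] by simp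
qed

lemma extended_rep_bij: "g \<in> carrier G \<Longrightarrow> bij (extended_rep g)"
  by (rule o_bij[where g = "extended_rep (inv g)"])
    (simp_all add: fun_eq_iff extended_rep_mult extended_rep_one)

lemma extended_rep_unitary_op:
  assumes g: "g \<in> carrier G"
  shows "unitary_op smul ip (extended_rep g)"
proof -
  have "\<forall>a\<in>K. \<forall>b\<in>K. ip (\<rho> (act g a) v) (\<rho> (act g b) v) = ip (\<rho> a v) (\<rho> b v)"
    using ip_rep_orbit_act[OF invariant g] by blast
  then show ?thesis
    unfolding unitary_op_def using extended_rep_bij[OF g]
      linear_extension_linear[OF finite_K spanning] linear_extension_ip[OF finite_K spanning]
    by (simp add: extended_rep_def)
qed

lemma extended_rep_unitary_rep: "unitary_rep G (carrier G) smul ip extended_rep"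
  unfolding unitary_rep_def
  using extended_rep_unitary_op extended_rep_mult by (simp add: fun_eq_iff)

lemma extended_rep_restrict_K:
  assumes k: "k \<in> K"
  shows "extended_rep k = \<rho> k"
proof
  fix w
  let ?c = "coords (\<lambda>k. \<rho> k v) K w"
  have hom: "module_hom smul smul (\<rho> k)"
    using rep_unitary_op[OF k] unfolding unitary_op_def module_hom_iff_linear by blast
  have "extended_rep k w = (\<Sum>j\<in>K. smul (?c j) (\<rho> k (\<rho> j v)))"
    unfolding extended_rep_def linear_extension_def using act_K rep_mult k by simp
  also have "\<dots> = \<rho> k (\<Sum>j\<in>K. smul (?c j) (\<rho> j v))"
    by (simp add: module_hom.sum[OF hom] module_hom.scale[OF hom])
  also have "\<dots> = \<rho> k w"
    using sum_scale_coords[OF finite_K spanning] by simp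
  finally show "extended_rep k w = \<rho> k w" .
qed

lemma extended_rep_fixes_v:
  assumes h: "h \<in> stabilizer G \<phi> x0"
  shows "extended_rep h v = v"
proof -
  have "extended_rep h (\<rho> \<one> v) = \<rho> (act h \<one>) v"
    using extended_rep_sum_scale[of h id "{\<one>}" "\<lambda>_. 1"] h subgroup.one_closed[OF subgroup_K]
    by (simp add: mem_stabilizer_iff)
  then show ?thesis
    using act_stabilizer_one[OF h] rep_one by simp
qed

end

lemma invariant_if_extension:
  assumes ext: "unitary_rep G (carrier G) smul ip \<rho>'" "\<forall>k\<in>K. \<rho>' k = \<rho> k"
    and fixes_v: "\<forall>h\<in>stabilizer G \<phi> x0. \<rho>' h v = v"
  shows "in_L2_inv G \<phi> x0 (stabilizer G \<phi> x0) K (\<lambda>k. ip v (\<rho> k v))"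
  unfolding in_L2_inv_def
proof (intro ballI)
  fix h k assume h: "h \<in> stabilizer G \<phi> x0" and k: "k \<in> K"
  have hc: "h \<in> carrier G" using h by (simp add: mem_stabilizer_iff)
  obtain h' where h': "h' \<in> stabilizer G \<phi> x0" "h \<otimes> k = act h k \<otimes> h'"
    using mult_eq_act_mult_stabilizer[OF hc k] by blast
  have hk: "act h k \<in> K" using act_closed(1)[OF hc k] .
  have c: "h \<in> carrier G" "k \<in> carrier G" "h' \<in> carrier G" "act h k \<in> carrier G"
    using hc k h'(1) hk K_subset by (auto simp: mem_stabilizer_iff)
  have hom: "\<rho>' (a \<otimes> b) = \<rho>' a \<circ> \<rho>' b" if "a \<in> carrier G" "b \<in> carrier G" for a b
    using ext(1) that unfolding unitary_rep_def by blast
  have isometry: "ip (\<rho>' h a) (\<rho>' h b) = ip a b" for a b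
    using ext(1) c(1) unfolding unitary_rep_def unitary_op_def by blast
  have "\<rho> (act h k) v = \<rho>' (act h k) (\<rho>' h' v)"
    using ext(2) fixes_v h'(1) hk by simp
  also have "\<dots> = \<rho>' h (\<rho> k v)"
    using hom c h'(2) ext(2) k by (metis comp_apply)
  finally have "ip v (\<rho> (act h k) v) = ip (\<rho>' h v) (\<rho>' h (\<rho> k v))"
    using fixes_v h by simp
  then show "ip v (\<rho> (act h k) v) = ip v (\<rho> k v)"
    using isometry by simp
qed

end

theorem corollary3p13:
  fixes G :: "('g, 'm) monoid_scheme" and X :: "'x set" and \<phi> :: "'g \<Rightarrow> 'x \<Rightarrow> 'x"
    and x0 :: 'x and H K :: "'g set"
    and smul :: "complex \<Rightarrow> 'v::ab_group_add \<Rightarrow> 'v" and ip :: "'v \<Rightarrow> 'v \<Rightarrow> complex"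
    and \<rho> :: "'g \<Rightarrow> 'v \<Rightarrow> 'v" and v :: 'v
  assumes "group G" and "finite (carrier G)" and "finite X"
    and "transitive_action G X \<phi>"
    and "x0 \<in> X" and "H = stabilizer G \<phi> x0"
    and "regular_subgroup G X \<phi> K"
    and "vector_space smul" and "complex_inner_product smul ip"
    and "unitary_rep G K smul ip \<rho>"
    and "module.span smul ((\<lambda>k. \<rho> k v) ` K) = UNIV"
  shows "(\<exists>\<rho>'. unitary_rep G (carrier G) smul ip \<rho>' \<and> (\<forall>k\<in>K. \<rho>' k = \<rho> k)
                \<and> (\<forall>h\<in>H. \<rho>' h v = v))
         \<longleftrightarrow> in_L2_inv G \<phi> x0 H K (\<lambda>k. ip v (\<rho> k v))"
proof -
  interpret unitary_rep_of_regular_subgroup G X \<phi> x0 K smul ip \<rho> v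
    using assms(4,5,7-10)
    by (intro unitary_rep_of_regular_subgroup.intro regular_subgroup_action.intro
        regular_subgroup_action_axioms.intro complex_inner_product_space.intro
        complex_inner_product_space_axioms.intro unitary_rep_of_regular_subgroup_axioms.intro)
      (auto simp: transitive_action_def)
  show ?thesis
    unfolding assms(6)
    using invariant_if_extension extended_rep_unitary_rep[OF assms(2,11)]
      extended_rep_restrict_K[OF assms(2,11)] extended_rep_fixes_v[OF assms(2,11)]
    by blast
qed

end
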